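(* Let $G$ be a unit square graph with realization $f$, let $\mathcal{P}$ be a clique-partition of $V(G)$, and let $\simeq$ be the equivalence relation on $V(G)\cup\mathcal{M}(G)$ whose classes form the coarsest partition of $V(G)\cup\mathcal{M}(G)$ that is stable with respect to $G^*_{\mathcal{M}}$ and refines $\mathcal{P}\cup\{\mathcal{M}(G)\}$. If $C,D$ are distinct maximal cliques with $C\simeq D$, then $z_f(C)_i\cap z_f(D)_i=\emptyset$ for $i=1,2$.
   Context: A realization of $G$ is $f\colon V(G)\to\mathbb{R}^2$ with $vw\in E(G)$ iff $\|f(v)-f(w)\|_\infty\le1$ for distinct $v,w$; a unit square graph is a graph with a realization. A clique-partition is a partition of $V(G)$ all of whose parts are cliques. $\mathcal{M}(G)$ is the set of maximal cliques. $G^*_{\mathcal{M}}$ is the graph on $V(G)\sqcup\mathcal{M}(G)$ with edge set $E(G)\cup\{vC \mid C\in\mathcal{M}(G), v\in C\}$. A partition $\mathcal{Q}$ of the vertex set of a graph $H$ is stable if for all $X,Y\in\mathcal{Q}$ and $v,w\in X$, $|N_H(v)\cap Y|=|N_H(w)\cap Y|$. The center of a maximal clique $C$ is $z_f(C)=\{p\in\mathbb{R}^2\mid\forall v\in C:\|f(v)-p\|_\infty\le\tfrac12\}$, and $z_f(C)_i=\{p_i\mid p\in z_f(C)\}$ is its projection to the $i$-th coordinate. *)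

theory Defs
  imports Complex_Main "HOL-Library.Disjoint_Sets"
begin

definition graph :: "'a set \<Rightarrow> ('a \<Rightarrow> 'a \<Rightarrow> bool) \<Rightarrow> bool" where
  "graph V E \<longleftrightarrow> finite V \<and> (\<forall>v w. E v w \<longrightarrow> v \<in> V \<and> w \<in> V \<and> v \<noteq> w \<and> E w v)"

definition linf_dist :: "real \<times> real \<Rightarrow> real \<times> real \<Rightarrow> real" where
  "linf_dist p q = max \<bar>fst p - fst q\<bar> \<bar>snd p - snd q\<bar>"

definition realization :: "'a set \<Rightarrow> ('a \<Rightarrow> 'a \<Rightarrow> bool) \<Rightarrow> ('a \<Rightarrow> real \<times> real) \<Rightarrow> bool" where
  "realization V E f \<longleftrightarrow>
     (\<forall>v\<in>V. \<forall>w\<in>V. v \<noteq> w \<longrightarrow> (E v w \<longleftrightarrow> linf_dist (f v) (f w) \<le> 1))"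

definition unit_square_graph :: "'a set \<Rightarrow> ('a \<Rightarrow> 'a \<Rightarrow> bool) \<Rightarrow> bool" where
  "unit_square_graph V E \<longleftrightarrow> graph V E \<and> (\<exists>f. realization V E f)"

definition clique :: "'a set \<Rightarrow> ('a \<Rightarrow> 'a \<Rightarrow> bool) \<Rightarrow> 'a set \<Rightarrow> bool" where
  "clique V E C \<longleftrightarrow> C \<subseteq> V \<and> (\<forall>v\<in>C. \<forall>w\<in>C. v \<noteq> w \<longrightarrow> E v w)"

definition max_cliques :: "'a set \<Rightarrow> ('a \<Rightarrow> 'a \<Rightarrow> bool) \<Rightarrow> 'a set set" where
  "max_cliques V E = {C. clique V E C \<and> (\<forall>D. clique V E D \<and> C \<subseteq> D \<longrightarrow> D = C)}"

definition clique_partition :: "'a set \<Rightarrow> ('a \<Rightarrow> 'a \<Rightarrow> bool) \<Rightarrow> 'a set set \<Rightarrow> bool" where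
  "clique_partition V E P \<longleftrightarrow> partition_on V P \<and> (\<forall>X\<in>P. clique V E X)"

text \<open>The graph G*_M on the disjoint union V + \<M>(G) (vertices Inl v, cliques Inr C).\<close>
definition star_vertices :: "'a set \<Rightarrow> ('a \<Rightarrow> 'a \<Rightarrow> bool) \<Rightarrow> ('a + 'a set) set" where
  "star_vertices V E = Inl ` V \<union> Inr ` max_cliques V E"

fun star_edge :: "'a set \<Rightarrow> ('a \<Rightarrow> 'a \<Rightarrow> bool) \<Rightarrow> ('a + 'a set) \<Rightarrow> ('a + 'a set) \<Rightarrow> bool" where
  "star_edge V E (Inl v) (Inl w) = E v w"
| "star_edge V E (Inl v) (Inr C) = (C \<in> max_cliques V E \<and> v \<in> C)"
| "star_edge V E (Inr C) (Inl v) = (C \<in> max_cliques V E \<and> v \<in> C)"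
| "star_edge V E (Inr C) (Inr D) = False"

definition stable :: "('b \<Rightarrow> 'b \<Rightarrow> bool) \<Rightarrow> 'b set set \<Rightarrow> bool" where
  "stable EH Q \<longleftrightarrow> (\<forall>X\<in>Q. \<forall>Y\<in>Q. \<forall>v\<in>X. \<forall>w\<in>X.
       card {u\<in>Y. EH v u} = card {u\<in>Y. EH w u})"

definition refines :: "'b set set \<Rightarrow> 'b set set \<Rightarrow> bool" where
  "refines Q R \<longleftrightarrow> (\<forall>X\<in>Q. \<exists>Y\<in>R. X \<subseteq> Y)"

definition base_partition :: "'a set \<Rightarrow> ('a \<Rightarrow> 'a \<Rightarrow> bool) \<Rightarrow> 'a set set \<Rightarrow> ('a + 'a set) set set" where
  "base_partition V E P = (\<lambda>X. Inl ` X) ` P \<union> {Inr ` max_cliques V E}"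

definition coarsest_stable_refinement ::
  "'b set \<Rightarrow> ('b \<Rightarrow> 'b \<Rightarrow> bool) \<Rightarrow> 'b set set \<Rightarrow> 'b set set \<Rightarrow> bool" where
  "coarsest_stable_refinement W EH R Q \<longleftrightarrow>
     partition_on W Q \<and> stable EH Q \<and> refines Q R \<and>
     (\<forall>Q'. partition_on W Q' \<and> stable EH Q' \<and> refines Q' R \<longrightarrow> refines Q' Q)"

definition center :: "('a \<Rightarrow> real \<times> real) \<Rightarrow> 'a set \<Rightarrow> (real \<times> real) set" where
  "center f C = {p. \<forall>v\<in>C. linf_dist (f v) p \<le> 1/2}"

end

theory Submission
  imports Defs
begin

text \<open>Suppose the \<open>i\<close>-th projections of the centers of \<open>C\<close> and \<open>D\<close> share a point. Then all vertices
  of \<open>C \<union> D\<close> lie in a strip of width 1 in coordinate \<open>i\<close>, so on \<open>C \<union> D\<close> adjacency is decided by the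
  other coordinate alone, as in a unit interval graph. Stability of the partition yields, for
  every \<open>u \<in> C - D\<close>, a neighbour in \<open>D - C\<close> (and symmetrically): inside the class of \<open>u\<close>, which lies
  in a clique of \<open>P\<close>, the cliques \<open>C\<close> and \<open>D\<close> have equally many members. Taking \<open>u\<close> to be the
  vertex of the symmetric difference with the smallest other coordinate, its neighbour on the
  other side turns out to be adjacent to the whole clique containing \<open>u\<close>, contradicting maximality.\<close>

lemma max_cliques_subset: "C \<in> max_cliques V E \<Longrightarrow> C \<subseteq> V"
  by (auto simp: max_cliques_def clique_def)

lemma max_cliques_adjacent:
  "C \<in> max_cliques V E \<Longrightarrow> v \<in> C \<Longrightarrow> w \<in> C \<Longrightarrow> v \<noteq> w \<Longrightarrow> E v w"
  by (auto simp: max_cliques_def clique_def)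

lemma max_clique_absorbs_common_neighbour:
  assumes "graph V E" and C: "C \<in> max_cliques V E" and "d \<in> V"
    and adj: "\<And>c. c \<in> C \<Longrightarrow> c \<noteq> d \<Longrightarrow> E c d"
  shows "d \<in> C"
proof -
  have sym: "E x y \<Longrightarrow> E y x" for x y
    using \<open>graph V E\<close> by (auto simp: graph_def)
  have "clique V E C"
    using C by (simp add: max_cliques_def)
  then have "clique V E (insert d C)"
    using \<open>d \<in> V\<close> adj sym by (auto simp: clique_def)
  then have "insert d C = C"
    using C by (auto simp: max_cliques_def)
  then show ?thesis by auto
qed

lemma star_class_of_vertex:
  assumes part: "partition_on (star_vertices V E) Q"
    and refine: "refines Q (base_partition V E P)" and "u \<in> V"
  obtains X Y where "Inl ` X \<in> Q" "u \<in> X" "Y \<in> P" "X \<subseteq> Y"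
proof -
  have "Inl u \<in> star_vertices V E"
    using \<open>u \<in> V\<close> by (simp add: star_vertices_def)
  then obtain Z where Z: "Z \<in> Q" "Inl u \<in> Z"
    using part by (auto simp: partition_on_def)
  then obtain Y where "Y \<in> P" "Z \<subseteq> Inl ` Y"
    using refine by (auto simp: refines_def base_partition_def)
  moreover have "Z = Inl ` {v. Inl v \<in> Z}"
    using calculation by auto
  ultimately show ?thesis
    using that[of "{v. Inl v \<in> Z}" Y] Z by auto
qed

lemma equal_card_clique_neighbour:
  assumes "finite X" and X: "\<And>v w. v \<in> X \<Longrightarrow> w \<in> X \<Longrightarrow> v \<noteq> w \<Longrightarrow> E v w"
    and card_eq: "card (X \<inter> C) = card (X \<inter> D)"
    and "u \<in> X" "u \<in> C" "u \<notin> D"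
  shows "\<exists>d\<in>D - C. E u d"
proof (rule ccontr)
  assume "\<not> ?thesis"
  then have "X \<inter> D \<subseteq> X \<inter> C"
    using X \<open>u \<in> X\<close> \<open>u \<notin> D\<close> by blast
  then have "X \<inter> D = X \<inter> C"
    using card_eq \<open>finite X\<close> by (metis card_subset_eq finite_Int)
  then show False
    using \<open>u \<in> X\<close> \<open>u \<in> C\<close> \<open>u \<notin> D\<close> by auto
qed

lemma stable_equivalent_cliques_neighbour:
  assumes "graph V E" and P: "clique_partition V E P"
    and part: "partition_on (star_vertices V E) Q" and "stable (star_edge V E) Q"
    and "refines Q (base_partition V E P)"
    and C: "C \<in> max_cliques V E" and D: "D \<in> max_cliques V E"
    and "K \<in> Q" "Inr C \<in> K" "Inr D \<in> K"
    and "u \<in> C" "u \<notin> D"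
  shows "\<exists>d\<in>D - C. E u d"
proof -
  have "u \<in> V"
    using max_cliques_subset[OF C] \<open>u \<in> C\<close> by auto
  then obtain X Y where X: "Inl ` X \<in> Q" "u \<in> X" "Y \<in> P" "X \<subseteq> Y"
    using star_class_of_vertex[OF part \<open>refines Q _\<close>] by metis
  have "clique V E Y"
    using P \<open>Y \<in> P\<close> by (simp add: clique_partition_def)
  then have Y: "Y \<subseteq> V" "\<And>v w. v \<in> Y \<Longrightarrow> w \<in> Y \<Longrightarrow> v \<noteq> w \<Longrightarrow> E v w"
    by (auto simp: clique_def)
  have "finite X"
    using \<open>graph V E\<close> Y(1) \<open>X \<subseteq> Y\<close> by (auto simp: graph_def intro: finite_subset)
  have neighbours: "{w \<in> Inl ` X. star_edge V E (Inr B) w} = Inl ` (X \<inter> B)"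
    if "B \<in> max_cliques V E" for B
    using that by auto
  have "card {w \<in> Inl ` X. star_edge V E (Inr C) w} = card {w \<in> Inl ` X. star_edge V E (Inr D) w}"
    using \<open>stable _ Q\<close> \<open>K \<in> Q\<close> X(1) \<open>Inr C \<in> K\<close> \<open>Inr D \<in> K\<close> unfolding stable_def by blast
  then have "card (X \<inter> C) = card (X \<inter> D)"
    by (simp add: neighbours[OF C] neighbours[OF D] card_image)
  then show ?thesis
    using equal_card_clique_neighbour[OF \<open>finite X\<close>] Y(2) X \<open>u \<in> C\<close> \<open>u \<notin> D\<close> by blast
qed

lemma interval_min_neighbour_adjacent_all:
  fixes a :: "'a \<Rightarrow> real"
  assumes adj: "\<And>v w. v \<in> C \<union> D \<Longrightarrow> w \<in> C \<union> D \<Longrightarrow> v \<noteq> w \<Longrightarrow> E v w \<longleftrightarrow> \<bar>a v - a w\<bar> \<le> 1"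
    and C_clique: "\<And>v w. v \<in> C \<Longrightarrow> w \<in> C \<Longrightarrow> v \<noteq> w \<Longrightarrow> E v w"
    and D_clique: "\<And>v w. v \<in> D \<Longrightarrow> w \<in> D \<Longrightarrow> v \<noteq> w \<Longrightarrow> E v w"
    and "u \<in> C - D" and u_min: "\<And>w. w \<in> (C - D) \<union> (D - C) \<Longrightarrow> a u \<le> a w"
    and "d \<in> D - C" "E u d"
    and "c \<in> C" "c \<noteq> d"
  shows "E c d"
proof (cases "c \<in> D")
  case True
  then show ?thesis using D_clique \<open>d \<in> D - C\<close> \<open>c \<noteq> d\<close> by auto
next
  case False
  have "u \<noteq> d"
    using \<open>u \<in> C - D\<close> \<open>d \<in> D - C\<close> by auto
  then have ud: "a u \<le> a d" "a d \<le> a u + 1"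
    using u_min[of d] adj[of u d] \<open>u \<in> C - D\<close> \<open>d \<in> D - C\<close> \<open>E u d\<close> by auto
  have "a u \<le> a c"
    using u_min[of c] \<open>c \<in> C\<close> False by auto
  moreover have "a c \<le> a u + 1" if "a d < a c"
  proof -
    have "c \<noteq> u" using that ud by auto
    then have "E u c"
      using C_clique \<open>u \<in> C - D\<close> \<open>c \<in> C\<close> by auto
    then show ?thesis
      using adj[of u c] \<open>u \<in> C - D\<close> \<open>c \<in> C\<close> \<open>c \<noteq> u\<close> by auto
  qed
  ultimately have "\<bar>a c - a d\<bar> \<le> 1"
    using ud by (cases "a d < a c") auto
  then show ?thesis
    using adj[of c d] \<open>c \<in> C\<close> \<open>d \<in> D - C\<close> \<open>c \<noteq> d\<close> by auto
qed

lemma interval_equivalent_max_cliques_eq: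
  fixes a :: "'a \<Rightarrow> real"
  assumes "graph V E" and C: "C \<in> max_cliques V E" and D: "D \<in> max_cliques V E"
    and adj: "\<And>v w. v \<in> C \<union> D \<Longrightarrow> w \<in> C \<union> D \<Longrightarrow> v \<noteq> w \<Longrightarrow> E v w \<longleftrightarrow> \<bar>a v - a w\<bar> \<le> 1"
    and CD: "\<And>u. u \<in> C - D \<Longrightarrow> \<exists>d\<in>D - C. E u d"
    and DC: "\<And>u. u \<in> D - C \<Longrightarrow> \<exists>d\<in>C - D. E u d"
  shows "C = D"
proof -
  have no_min: False
    if C: "C \<in> max_cliques V E" and D: "D \<in> max_cliques V E"
      and adj: "\<And>v w. v \<in> C \<union> D \<Longrightarrow> w \<in> C \<union> D \<Longrightarrow> v \<noteq> w \<Longrightarrow> E v w \<longleftrightarrow> \<bar>a v - a w\<bar> \<le> 1"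
      and CD: "\<And>u. u \<in> C - D \<Longrightarrow> \<exists>d\<in>D - C. E u d"
      and "u \<in> C - D" and u_min: "\<And>w. w \<in> (C - D) \<union> (D - C) \<Longrightarrow> a u \<le> a w"
    for C D u
  proof -
    obtain d where d: "d \<in> D - C" "E u d"
      using CD \<open>u \<in> C - D\<close> by blast
    have "E c d" if "c \<in> C" "c \<noteq> d" for c
      using interval_min_neighbour_adjacent_all[OF adj max_cliques_adjacent[OF C]
          max_cliques_adjacent[OF D] \<open>u \<in> C - D\<close> u_min d that] by blast
    then have "d \<in> C"
      using max_clique_absorbs_common_neighbour[OF \<open>graph V E\<close> C] max_cliques_subset[OF D] d
      by blast
    then show False using d by blast
  qed
  have "finite ((C - D) \<union> (D - C))"
    using \<open>graph V E\<close> max_cliques_subset[OF C] max_cliques_subset[OF D]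
    by (auto simp: graph_def intro: finite_subset)
  show "C = D"
  proof (rule ccontr)
    assume "C \<noteq> D"
    then have "(C - D) \<union> (D - C) \<noteq> {}" by blast
    then obtain u where u: "u \<in> (C - D) \<union> (D - C)"
      and u_min: "\<And>w. w \<in> (C - D) \<union> (D - C) \<Longrightarrow> a u \<le> a w"
      using arg_min_if_finite[OF \<open>finite _\<close>, of a] by (metis not_le)
    show False
    proof (cases "u \<in> C")
      case True
      then show False
        using no_min[OF C D adj CD _ u_min] u by blast
    next
      case False
      have "w \<in> (D - C) \<union> (C - D) \<Longrightarrow> a u \<le> a w" for w
        using u_min by blast
      moreover have "v \<in> D \<union> C \<Longrightarrow> w \<in> D \<union> C \<Longrightarrow> v \<noteq> w \<Longrightarrow> E v w \<longleftrightarrow> \<bar>a v - a w\<bar> \<le> 1" for v w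
        using adj by blast
      ultimately show False
        using no_min[OF D C _ DC] u False by blast
    qed
  qed
qed

lemma common_projection_interval_adjacency:
  fixes g h :: "real \<times> real \<Rightarrow> real"
  assumes linf: "\<And>p q. linf_dist p q = max \<bar>g p - g q\<bar> \<bar>h p - h q\<bar>"
    and "realization V E f" and "C \<union> D \<subseteq> V"
    and "p \<in> center f C" "q \<in> center f D" "g p = g q"
    and "v \<in> C \<union> D" "w \<in> C \<union> D" "v \<noteq> w"
  shows "E v w \<longleftrightarrow> \<bar>h (f v) - h (f w)\<bar> \<le> 1"
proof -
  have near: "\<bar>g (f x) - g p\<bar> \<le> 1/2" if "x \<in> C \<union> D" for x
    using that \<open>p \<in> center f C\<close> \<open>q \<in> center f D\<close> \<open>g p = g q\<close>
    by (auto simp: center_def linf max_def split: if_splits)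
  have "\<bar>g (f v) - g (f w)\<bar> \<le> 1"
    using near[OF \<open>v \<in> C \<union> D\<close>] near[OF \<open>w \<in> C \<union> D\<close>] by linarith
  moreover have "E v w \<longleftrightarrow> linf_dist (f v) (f w) \<le> 1"
    using \<open>realization V E f\<close> assms(3,7-9) unfolding realization_def by blast
  ultimately show ?thesis
    by (simp add: linf)
qed

lemma equivalent_cliques_disjoint_projection:
  fixes g h :: "real \<times> real \<Rightarrow> real"
  assumes linf: "\<And>p q. linf_dist p q = max \<bar>g p - g q\<bar> \<bar>h p - h q\<bar>"
    and "graph V E" and "realization V E f" and P: "clique_partition V E P"
    and part: "partition_on (star_vertices V E) Q" and stab: "stable (star_edge V E) Q"
    and refine: "refines Q (base_partition V E P)"
    and C: "C \<in> max_cliques V E" and D: "D \<in> max_cliques V E" and "C \<noteq> D"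
    and "K \<in> Q" "Inr C \<in> K" "Inr D \<in> K"
  shows "g ` center f C \<inter> g ` center f D = {}"
proof (rule ccontr)
  assume "g ` center f C \<inter> g ` center f D \<noteq> {}"
  then obtain p q where pq: "p \<in> center f C" "q \<in> center f D" "g p = g q"
    by blast
  have "C \<union> D \<subseteq> V"
    using max_cliques_subset[OF C] max_cliques_subset[OF D] by blast
  note neighbour = stable_equivalent_cliques_neighbour[OF \<open>graph V E\<close> P part stab refine]
  have "C = D"
  proof (rule interval_equivalent_max_cliques_eq[OF \<open>graph V E\<close> C D])
    show "E v w \<longleftrightarrow> \<bar>h (f v) - h (f w)\<bar> \<le> 1" if "v \<in> C \<union> D" "w \<in> C \<union> D" "v \<noteq> w" for v w
      using common_projection_interval_adjacency[OF linf \<open>realization V E f\<close> \<open>C \<union> D \<subseteq> V\<close> pq that] .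
    show "\<exists>d\<in>D - C. E u d" if "u \<in> C - D" for u
      using neighbour[OF C D \<open>K \<in> Q\<close> \<open>Inr C \<in> K\<close> \<open>Inr D \<in> K\<close>] that by blast
    show "\<exists>d\<in>C - D. E u d" if "u \<in> D - C" for u
      using neighbour[OF D C \<open>K \<in> Q\<close> \<open>Inr D \<in> K\<close> \<open>Inr C \<in> K\<close>] that by blast
  qed
  then show False
    using \<open>C \<noteq> D\<close> by contradiction
qed

theorem mainTheorem12:
  fixes V :: "'a set" and E :: "'a \<Rightarrow> 'a \<Rightarrow> bool" and f :: "'a \<Rightarrow> real \<times> real"
    and P :: "'a set set" and Q :: "('a + 'a set) set set" and C D :: "'a set"
  assumes "unit_square_graph V E"
    and "realization V E f"
    and "clique_partition V E P"
    and "coarsest_stable_refinement (star_vertices V E) (star_edge V E) (base_partition V E P) Q"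
    and "C \<in> max_cliques V E" and "D \<in> max_cliques V E" and "C \<noteq> D"
    and "\<exists>X\<in>Q. Inr C \<in> X \<and> Inr D \<in> X"
  shows "fst ` center f C \<inter> fst ` center f D = {} \<and> snd ` center f C \<inter> snd ` center f D = {}"
proof -
  have "graph V E"
    using assms(1) by (simp add: unit_square_graph_def)
  moreover note Q = assms(4)[unfolded coarsest_stable_refinement_def]
  moreover obtain K where "K \<in> Q" "Inr C \<in> K" "Inr D \<in> K"
    using assms(8) by blast
  ultimately have "g ` center f C \<inter> g ` center f D = {}"
    if "\<And>p q. linf_dist p q = max \<bar>g p - g q\<bar> \<bar>h p - h q\<bar>" for g h :: "real \<times> real \<Rightarrow> real"
    using equivalent_cliques_disjoint_projection[OF that] assms(2,3,5-7) by blast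
  moreover have "linf_dist p q = max \<bar>fst p - fst q\<bar> \<bar>snd p - snd q\<bar>"
    and "linf_dist p q = max \<bar>snd p - snd q\<bar> \<bar>fst p - fst q\<bar>" for p q
    by (simp_all add: linf_dist_def max.commute)
  ultimately show ?thesis
    by blast
qed

end
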